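(* Let $V$ be a nonempty set (finite or infinite), let $E\subset V\times V$, and let $W\subset V$. For all vertices $b,c\in W^c=V\setminus W$ we have $$\operatorname{cl}_W\big(R_W b\big)\cap \operatorname{cl}_W\big(R_W c\big)=\emptyset \iff \neg\,\big(b\,A_W\,c\big),$$ that is, $b$ and $c$ are t-separated with respect to $W$ if and only if they are d-separated with respect to $W$.
   Context: Relations on $V$: $x\,R\,y$ means $(x,y)\in R$; the composition $RR'$ is defined by $x(RR')y$ iff there is $z\in V$ with $xRz$ and $zR'y$; $R^{-1}$ is the converse ($xR^{-1}y\iff yRx$); $R^0=\Delta$, $R^{n+1}=RR^n$, $R^+=\bigcup_{k\ge1}R^k$, $R^*=\bigcup_{k\ge0}R^k$. For $S\subset V$, $\Delta_S=\{(x,x):x\in S\}$ and $\Delta=\Delta_V$. For $S\subset V$, the foreset is $RS=\{x\in V:\exists s\in S,\ xRs\}$ and the afterset is $SR=\{y\in V:\exists s\in S,\ sRy\}$; for a vertex $c$, $Rc=R\{c\}$. For any relation $F$ on $V$, $\mathcal T_F=\{O\subset V: OF\subset O\}$ is a topology on $V$. Given $W\subset V$ with $W^c=V\setminus W$, define: $E_W=\Delta_{W^c}E$ (so $xE_Wy$ iff $x\in W^c$ and $xEy$); $B_W=E(E_W)^*$ and $B_W^-=(B_W)^{-1}=(E_W^{-1})^*E^{-1}$; $K_W=B_W^-\Delta_{W^c}B_W$ (equivalently $(E_W^{-1})^+(E_W)^+$); $C_W=(\Delta_WK_W\Delta_W)^+\cup\Delta_W$; $A_W=\Delta\cup B_W\cup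 B_W^-\cup K_W\cup(B_W\cup K_W)\,C_W\,(B_W^-\cup K_W^{-1})$; $R_W=\Delta\cup C_W(B_W^-\cup K_W^{-1})$. For $S\subset V$, $\operatorname{cl}_W(S)$ denotes the topological closure of $S$ in the topology $\mathcal T_{E_W}$. Vertices $b,c$ are called t-separated w.r.t. $W$ if $\operatorname{cl}_W(R_Wb)\cap\operatorname{cl}_W(R_Wc)=\emptyset$, and d-separated w.r.t. $W$ if $\neg(b\,A_W\,c)$. *)

theory Defs
  imports "HOL-Analysis.Analysis"
begin

(* The vertex set V is the (arbitrary, automatically nonempty) type 'a;
   relations on V are of type ('a \<times> 'a) set.  Composition R R' is R O R',
   Delta_S is Id_on S, R^* is rtrancl, R^+ is trancl. *)

definition rel_top :: "('a \<times> 'a) set \<Rightarrow> 'a topology" where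
  "rel_top F = topology (\<lambda>U. F `` U \<subseteq> U)"

definition EW :: "('a \<times> 'a) set \<Rightarrow> 'a set \<Rightarrow> ('a \<times> 'a) set" where
  "EW E W = Id_on (- W) O E"

definition BW :: "('a \<times> 'a) set \<Rightarrow> 'a set \<Rightarrow> ('a \<times> 'a) set" where
  "BW E W = E O (EW E W)\<^sup>*"

definition BWm :: "('a \<times> 'a) set \<Rightarrow> 'a set \<Rightarrow> ('a \<times> 'a) set" where
  "BWm E W = converse (BW E W)"

definition KW :: "('a \<times> 'a) set \<Rightarrow> 'a set \<Rightarrow> ('a \<times> 'a) set" where
  "KW E W = BWm E W O Id_on (- W) O BW E W"

definition CW :: "('a \<times> 'a) set \<Rightarrow> 'a set \<Rightarrow> ('a \<times> 'a) set" where
  "CW E W = (Id_on W O KW E W O Id_on W)\<^sup>+ \<union> Id_on W"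

definition AW :: "('a \<times> 'a) set \<Rightarrow> 'a set \<Rightarrow> ('a \<times> 'a) set" where
  "AW E W = Id \<union> BW E W \<union> BWm E W \<union> KW E W \<union>
     ((BW E W \<union> KW E W) O CW E W O (BWm E W \<union> converse (KW E W)))"

definition RW :: "('a \<times> 'a) set \<Rightarrow> 'a set \<Rightarrow> ('a \<times> 'a) set" where
  "RW E W = Id \<union> (CW E W O (BWm E W \<union> converse (KW E W)))"

definition foreset :: "('a \<times> 'a) set \<Rightarrow> 'a \<Rightarrow> 'a set" where
  "foreset R c = {x. (x, c) \<in> R}"

definition clW :: "('a \<times> 'a) set \<Rightarrow> 'a set \<Rightarrow> 'a set \<Rightarrow> 'a set" where
  "clW E W S = (rel_top (EW E W)) closure_of S"

end

theory Submission
  imports Defs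
begin

text \<open>
  In the topology \<open>\<T>\<^sub>F\<close> the closure of \<open>S\<close> is the foreset \<open>F\<^sup>* S\<close>. Hence the two closures
  meet iff some vertex \<open>z\<close> has \<open>E\<^sub>W\<close>-paths to some \<open>s \<in> R\<^sub>W b\<close> and some \<open>t \<in> R\<^sub>W c\<close>.
  Two \<open>E\<^sub>W\<close>-paths from a common source relate their endpoints by \<open>\<Delta>\<close>, \<open>B\<^sub>W\<close>, \<open>B\<^sub>W\<^sup>-\<close> or \<open>K\<^sub>W\<close>,
  and since nontrivial \<open>E\<^sub>W\<close>-paths start in \<open>W\<^sup>c\<close>, endpoints in \<open>W\<close> are related by \<open>\<Delta>\<close> or
  \<open>K\<^sub>W\<close> only, hence by the equivalence relation \<open>C\<^sub>W\<close> on \<open>W\<close>. Combining this with the shape of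
  \<open>R\<^sub>W\<close> gives exactly the disjuncts of \<open>A\<^sub>W\<close>; conversely each disjunct of \<open>A\<^sub>W\<close> provides
  such a common source.
\<close>

lemma openin_rel_top: "openin (rel_top F) U \<longleftrightarrow> F `` U \<subseteq> U"
proof -
  have "istopology (\<lambda>U. F `` U \<subseteq> U)"
    unfolding istopology_def by blast
  then show ?thesis
    by (simp only: rel_top_def topology_inverse')
qed

lemma topspace_rel_top: "topspace (rel_top F) = UNIV"
  unfolding topspace_def openin_rel_top by blast

lemma closure_of_rel_top: "rel_top F closure_of S = {x. \<exists>s\<in>S. (x, s) \<in> F\<^sup>*}"
proof (intro set_eqI iffI)
  fix x assume x: "x \<in> rel_top F closure_of S"
  have "openin (rel_top F) {y. (x, y) \<in> F\<^sup>*}"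
    unfolding openin_rel_top by (auto intro: rtrancl_into_rtrancl)
  with x have "S \<inter> {y. (x, y) \<in> F\<^sup>*} \<noteq> {}"
    unfolding closure_of_def by auto
  then show "x \<in> {x. \<exists>s\<in>S. (x, s) \<in> F\<^sup>*}" by blast
next
  fix x assume "x \<in> {x. \<exists>s\<in>S. (x, s) \<in> F\<^sup>*}"
  then obtain s where s: "s \<in> S" "(x, s) \<in> F\<^sup>*" by blast
  have "s \<in> U" if "x \<in> U" "F `` U \<subseteq> U" for U
    using s(2) that by (induction rule: rtrancl_induct) auto
  with s(1) show "x \<in> rel_top F closure_of S"
    unfolding closure_of_def topspace_rel_top openin_rel_top by blast
qed

lemma equiv_trancl_restrict_Un_Id_on:
  assumes "sym R"
  shows "equiv A ((Id_on A O R O Id_on A)\<^sup>+ \<union> Id_on A)"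
proof (rule equivI)
  let ?S = "Id_on A O R O Id_on A"
  have "?S\<^sup>+ \<subseteq> A \<times> A"
    by (rule trancl_subset_Sigma) auto
  then show "?S\<^sup>+ \<union> Id_on A \<subseteq> A \<times> A" by blast
  show "refl_on A (?S\<^sup>+ \<union> Id_on A)"
    by (auto simp: refl_on_def)
  have "sym ?S"
    using assms by (auto simp: sym_def)
  then show "sym (?S\<^sup>+ \<union> Id_on A)"
    by (intro sym_Un sym_trancl sym_Id_on)
  show "trans (?S\<^sup>+ \<union> Id_on A)"
    by (auto simp: trans_def intro: trancl_trans)
qed

lemma EW_iff [simp]: "(x, y) \<in> EW E W \<longleftrightarrow> x \<notin> W \<and> (x, y) \<in> E"
  unfolding EW_def by auto

lemma trancl_EW_iff: "(x, y) \<in> (EW E W)\<^sup>+ \<longleftrightarrow> x \<notin> W \<and> (x, y) \<in> BW E W"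
  unfolding BW_def trancl_unfold_left by auto

lemma KW_iff: "(x, y) \<in> KW E W \<longleftrightarrow> (\<exists>z. z \<notin> W \<and> (z, x) \<in> BW E W \<and> (z, y) \<in> BW E W)"
  unfolding KW_def BWm_def by auto

lemma sym_KW: "sym (KW E W)"
  unfolding KW_iff sym_def by blast

lemma equiv_CW: "equiv W (CW E W)"
  unfolding CW_def by (rule equiv_trancl_restrict_Un_Id_on[OF sym_KW])

lemma RW_iff:
  "(s, b) \<in> RW E W \<longleftrightarrow> s = b \<or> (\<exists>u. (s, u) \<in> CW E W \<and> (b, u) \<in> BW E W \<union> KW E W)"
  unfolding RW_def BWm_def by auto

lemma AW_iff:
  "(b, c) \<in> AW E W \<longleftrightarrow>
     (b, c) \<in> Id \<union> BW E W \<union> converse (BW E W) \<union> KW E W \<or>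
     (\<exists>u v. (b, u) \<in> BW E W \<union> KW E W \<and> (u, v) \<in> CW E W \<and> (c, v) \<in> BW E W \<union> KW E W)"
  unfolding AW_def BWm_def by auto

lemma common_source_cases:
  assumes "(z, s) \<in> (EW E W)\<^sup>*" and "(z, t) \<in> (EW E W)\<^sup>*"
  obtains "s = t" | "s \<notin> W" "(s, t) \<in> BW E W" | "t \<notin> W" "(t, s) \<in> BW E W"
    | "(s, t) \<in> KW E W"
proof -
  from assms have "z = s \<or> (z, s) \<in> (EW E W)\<^sup>+" "z = t \<or> (z, t) \<in> (EW E W)\<^sup>+"
    by (meson rtranclD)+
  then show ?thesis
    using that unfolding trancl_EW_iff KW_iff by blast
qed

lemma common_source_outside_inside:
  assumes "(z, s) \<in> (EW E W)\<^sup>*" "(z, t) \<in> (EW E W)\<^sup>*" and "s \<notin> W" "t \<in> W"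
  shows "(s, t) \<in> BW E W \<union> KW E W"
  using assms by (cases rule: common_source_cases) auto

lemma common_source_inside:
  assumes "(z, s) \<in> (EW E W)\<^sup>*" "(z, t) \<in> (EW E W)\<^sup>*" and "s \<in> W" "t \<in> W"
  shows "(s, t) \<in> CW E W"
  using assms by (cases rule: common_source_cases) (auto simp: CW_def)

lemma AW_if_common_source:
  assumes "b \<notin> W" "c \<notin> W"
    and z: "(z, s) \<in> (EW E W)\<^sup>*" "(z, t) \<in> (EW E W)\<^sup>*"
    and R: "(s, b) \<in> RW E W" "(t, c) \<in> RW E W"
  shows "(b, c) \<in> AW E W"
proof -
  have CW_W: "x \<in> W" "y \<in> W" if "(x, y) \<in> CW E W" for x y
    using that equiv_CW[of W E] by (auto simp: equiv_def)
  have CW_sym: "(y, x) \<in> CW E W" if "(x, y) \<in> CW E W" for x y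
    using that equiv_CW[of W E] by (auto simp: equiv_def dest: symD)
  have CW_trans: "(x, y) \<in> CW E W \<Longrightarrow> (y, w) \<in> CW E W \<Longrightarrow> (x, w) \<in> CW E W" for x y w
    using equiv_CW[of W E] by (auto simp: equiv_def dest: transD)
  consider "s = b" "t = c"
    | v where "s = b" "(t, v) \<in> CW E W" "(c, v) \<in> BW E W \<union> KW E W"
    | u where "(s, u) \<in> CW E W" "(b, u) \<in> BW E W \<union> KW E W" "t = c"
    | u v where "(s, u) \<in> CW E W" "(b, u) \<in> BW E W \<union> KW E W"
        "(t, v) \<in> CW E W" "(c, v) \<in> BW E W \<union> KW E W"
    using R unfolding RW_iff by blast
  then show ?thesis
  proof cases
    case 1
    with z show ?thesis
      unfolding AW_iff by (cases rule: common_source_cases) auto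
  next
    case (2 v)
    with assms(1) z have "(b, t) \<in> BW E W \<union> KW E W"
      using common_source_outside_inside CW_W by metis
    with 2 show ?thesis
      unfolding AW_iff by blast
  next
    case (3 u)
    with assms(2) z have "(c, s) \<in> BW E W \<union> KW E W"
      using common_source_outside_inside CW_W by metis
    with 3 CW_sym show ?thesis
      unfolding AW_iff by blast
  next
    case (4 u v)
    with z have "(s, t) \<in> CW E W"
      using common_source_inside CW_W by metis
    with 4 have "(u, v) \<in> CW E W"
      using CW_sym CW_trans by metis
    with 4 show ?thesis
      unfolding AW_iff by blast
  qed
qed

lemma common_source_if_AW:
  assumes "b \<notin> W" "c \<notin> W" and "(b, c) \<in> AW E W"
  shows "\<exists>z s t. (z, s) \<in> (EW E W)\<^sup>* \<and> (z, t) \<in> (EW E W)\<^sup>* \<and>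
           (s, b) \<in> RW E W \<and> (t, c) \<in> RW E W"
proof -
  have RW_refl: "(x, x) \<in> RW E W" for x
    unfolding RW_iff by blast
  have rtrancl_EW_if_BW: "(x, y) \<in> (EW E W)\<^sup>*" if "x \<notin> W" "(x, y) \<in> BW E W" for x y
    using that trancl_EW_iff by (metis trancl_into_rtrancl)
  consider "(b, c) \<in> Id \<union> BW E W \<union> converse (BW E W) \<union> KW E W"
    | u v where "(b, u) \<in> BW E W \<union> KW E W" "(u, v) \<in> CW E W" "(c, v) \<in> BW E W \<union> KW E W"
    using assms(3) unfolding AW_iff by blast
  then show ?thesis
  proof cases
    case 1
    then consider "b = c" | "(b, c) \<in> BW E W" | "(c, b) \<in> BW E W"
      | z where "z \<notin> W" "(z, b) \<in> BW E W" "(z, c) \<in> BW E W"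
      by (auto simp: KW_iff)
    then show ?thesis
      using assms(1,2) RW_refl rtrancl_EW_if_BW by cases blast+
  next
    case (2 u v)
    \<comment> \<open>the common source is the vertex \<open>v \<in> W\<close> itself\<close>
    have "v \<in> W" "(v, u) \<in> CW E W" "(v, v) \<in> CW E W"
      using 2 equiv_CW[of W E] by (auto simp: equiv_def refl_on_def dest: symD)
    with 2 have "(v, b) \<in> RW E W" "(v, c) \<in> RW E W"
      unfolding RW_iff by blast+
    then show ?thesis by blast
  qed
qed

theorem theorem1:
  fixes E :: "('a \<times> 'a) set" and W :: "'a set" and b c :: 'a
  assumes "b \<notin> W" and "c \<notin> W"
  shows "clW E W (foreset (RW E W) b) \<inter> clW E W (foreset (RW E W) c) = {}
           \<longleftrightarrow> (b, c) \<notin> AW E W"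
proof -
  have "clW E W (foreset (RW E W) b) \<inter> clW E W (foreset (RW E W) c) \<noteq> {} \<longleftrightarrow>
        (\<exists>z s t. (z, s) \<in> (EW E W)\<^sup>* \<and> (z, t) \<in> (EW E W)\<^sup>* \<and>
           (s, b) \<in> RW E W \<and> (t, c) \<in> RW E W)"
    unfolding clW_def closure_of_rel_top foreset_def by blast
  with AW_if_common_source[OF assms] common_source_if_AW[OF assms] show ?thesis
    by blast
qed

end
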